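(* Let $A\in\mathbb{R}^{m\times n}$, $b\in\mathbb{R}^m$, $v\in\mathbb{R}^n$ with $v\ge0$, $\beta>0$, $\lambda>0$ and $\bar x\in\mathbb{R}^n$. Define $S_\lambda(z,v)=\operatorname{sign}(z)\odot\max\{|z|-\lambda v,0\}$ for $z\in\mathbb{R}^n$ and $$\Phi(y)=b^Ty+\frac{1}{2\beta}\|y\|^2+\frac{1}{2\lambda}\|S_\lambda(\bar x-\lambda A^Ty,v)\|^2,\qquad y\in\mathbb{R}^m.$$ Then: (a) $\Phi$ is a continuously differentiable convex function with $\nabla\Phi(y)=b+\beta^{-1}y-AS_\lambda(\bar x-\lambda A^Ty,v)$ for all $y\in\mathbb{R}^m$; (b) if $\hat y$ satisfies $\nabla\Phi(\hat y)=0$, then $(\hat u,\hat x)$ with $\hat u=-\beta^{-1}\hat y$ and $\hat x=S_\lambda(\bar x-\lambda A^T\hat y,v)$ is the unique optimal solution of $$\min_{u\in\mathbb{R}^m,x\in\mathbb{R}^n}\Big\{\langle v,|x|\rangle+\frac{\beta}{2}\|u\|^2+\frac{1}{2\lambda}\|x-\bar x\|^2:\ Ax+u=b\Big\};$$ (c) $\nabla\Phi$ is Lipschitz continuous and strongly semismooth; (d) for every $y\in\mathbb{R}^m$, with $z=\bar x-\lambda A^Ty$ and $H(x,v):=\operatorname{sign}(x)\odot\max\{|x|-\lambda v,0\}$, the Clarke generalized Jacobian of $\nabla\Phi$ satisfies $$\partial(\nabla\Phi)(y)\subseteq \beta^{-1}I+\lambda A\,\partial_x H(z,v)\,A^T,$$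 where $\partial_xH(z,v)$ is the Clarke generalized Jacobian of $H(\cdot,v)$ at $z$.
   Context: $\odot$ is the componentwise product, $\operatorname{sign}$, $|\cdot|$ and $\max$ act componentwise, $\|\cdot\|$ is the Euclidean norm, $I$ is the $m\times m$ identity. The right-hand side in (d) denotes the set $\{\beta^{-1}I+\lambda ADA^T: D\in\partial_xH(z,v)\}$. *)

theory Defs
  imports "HOL-Analysis.Analysis"
begin

definition soft_thr :: "real \<Rightarrow> real^'n \<Rightarrow> real^'n \<Rightarrow> real^'n" where
  "soft_thr lam z v = (\<chi> i. sgn (z $ i) * max (\<bar>z $ i\<bar> - lam * v $ i) 0)"

definition vabs :: "real^'n \<Rightarrow> real^'n" where
  "vabs x = (\<chi> i. \<bar>x $ i\<bar>)"

definition Phi :: "real^'n^'m \<Rightarrow> real^'m \<Rightarrow> real^'n \<Rightarrow> real \<Rightarrow> real \<Rightarrow> real^'n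
                   \<Rightarrow> real^'m \<Rightarrow> real" where
  "Phi A b v \<beta> lam xbar y =
     b \<bullet> y + (1 / (2 * \<beta>)) * (norm y)\<^sup>2
     + (1 / (2 * lam)) * (norm (soft_thr lam (xbar - lam *\<^sub>R (transpose A *v y)) v))\<^sup>2"

definition gradPhi :: "real^'n^'m \<Rightarrow> real^'m \<Rightarrow> real^'n \<Rightarrow> real \<Rightarrow> real \<Rightarrow> real^'n
                   \<Rightarrow> real^'m \<Rightarrow> real^'m" where
  "gradPhi A b v \<beta> lam xbar y =
     b + (1 / \<beta>) *\<^sub>R y - A *v soft_thr lam (xbar - lam *\<^sub>R (transpose A *v y)) v"

definition primal_obj :: "real^'n \<Rightarrow> real \<Rightarrow> real \<Rightarrow> real^'n \<Rightarrow> real^'m \<Rightarrow> real^'n \<Rightarrow> real" where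
  "primal_obj v \<beta> lam xbar u x =
     v \<bullet> vabs x + (\<beta> / 2) * (norm u)\<^sup>2 + (1 / (2 * lam)) * (norm (x - xbar))\<^sup>2"

definition bouligand_jac :: "(real^'a \<Rightarrow> real^'b) \<Rightarrow> real^'a \<Rightarrow> (real^'a^'b) set" where
  "bouligand_jac F x = {V. \<exists>s. (\<forall>k. F differentiable (at (s k))) \<and> s \<longlonglongrightarrow> x \<and>
       (\<lambda>k. matrix (frechet_derivative F (at (s k)))) \<longlonglongrightarrow> V}"

definition clarke_jac :: "(real^'a \<Rightarrow> real^'b) \<Rightarrow> real^'a \<Rightarrow> (real^'a^'b) set" where
  "clarke_jac F x = convex hull (bouligand_jac F x)"

definition strongly_semismooth_at :: "(real^'a \<Rightarrow> real^'b) \<Rightarrow> real^'a \<Rightarrow> bool" where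
  "strongly_semismooth_at F x \<longleftrightarrow>
     (\<exists>e>0. \<exists>L. lipschitz_on L (ball x e) F) \<and>
     (\<forall>d. \<exists>l. ((\<lambda>t. (1 / t) *\<^sub>R (F (x + t *\<^sub>R d) - F x)) \<longlongrightarrow> l) (at_right 0)) \<and>
     (\<exists>C \<delta>. \<delta> > 0 \<and> (\<forall>h. 0 < norm h \<and> norm h < \<delta> \<longrightarrow>
         (\<forall>V \<in> clarke_jac F (x + h). norm (F (x + h) - F x - V *v h) \<le> C * (norm h)\<^sup>2)))"

definition strongly_semismooth :: "(real^'a \<Rightarrow> real^'b) \<Rightarrow> bool" where
  "strongly_semismooth F \<longleftrightarrow> (\<forall>x. strongly_semismooth_at F x)"

end

theory Submission
  imports Defs
begin

text \<open>
  Coordinatewise, soft thresholding \<open>soft c\<close> is the proximal map of \<open>c \<bar>_\<bar>\<close>: the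
  residual \<open>t - soft c t\<close> is a subgradient of \<open>c \<bar>_\<bar>\<close> at \<open>soft c t\<close>. Hence
  \<open>(soft c t)\<^sup>2\<close> is convex with the 2-Lipschitz derivative \<open>2 soft c t\<close>, which gives
  \<open>0 \<le> \<Phi>(y + h) - \<Phi> y - \<nabla>\<Phi>(y) \<bullet> h \<le> K \<parallel>h\<parallel>\<^sup>2\<close>: differentiability, convexity and (a).
  The same subgradient inequality shows that the primal objective exceeds its value at
  the point built from a stationary \<open>y\<close> by two squares plus a nonnegative term (b).

  Moreover \<open>soft c\<close> is piecewise linear. Near any \<open>z\<close> each coordinate moves on an
  interval where \<open>soft\<close> is affine on either side of \<open>z\<close>, with the right resp. left
  slope at \<open>z\<close>. Hence all Jacobians of \<open>\<nabla>\<Phi>\<close> near \<open>y\<close>, and so its Clarke Jacobian,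
  lie in \<open>\<beta>\<inverse> I + \<lambda> A diag(box) A\<^sup>T\<close> for the box of diagonals between the two
  slopes, which is the convex hull of diagonals that are limits of Jacobians of soft
  thresholding (d); and \<open>\<nabla>\<Phi>(y + h) - \<nabla>\<Phi>(y) - V h\<close> vanishes for small \<open>h\<close> and every
  such \<open>V\<close> at \<open>y + h\<close> (c).
\<close>

lemma inner_matrix_vector_mult_transpose:
  fixes A :: "real^'n^'m"
  shows "(A *v x) \<bullet> y = x \<bullet> (transpose A *v y)"
  by (metis dot_lmul_matrix inner_commute transpose_matrix_vector)

lemma matrix_vector_mult_uminus: "A *v (- x) = - (A *v x)"
  for A :: "real^'n^'m"
  using matrix_vector_mult_diff_distrib[of A 0 x] by simp

lemma matrix_vector_mult_norm_bound:
  fixes M :: "real^'n^'m"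
  obtains B where "B > 0" "\<And>x. norm (M *v x) \<le> B * norm x"
  using bounded_linear.pos_bounded[OF matrix_vector_mul_bounded_linear[of M]]
  by (auto simp: mult.commute)

lemma power2_norm_cart: "(norm x)\<^sup>2 = (\<Sum>i\<in>UNIV. (x $ i)\<^sup>2)"
  for x :: "real^'n"
  unfolding power2_norm_eq_inner inner_vec_def by (simp add: power2_eq_square)

lemma norm_le_componentwise_cart:
  fixes x y :: "real^'n"
  assumes "\<And>i. \<bar>x $ i\<bar> \<le> \<bar>y $ i\<bar>"
  shows "norm x \<le> norm y"
  unfolding norm_vec_def by (rule L2_set_mono) (use assms in auto)

lemma finite_positive_lower_bound:
  fixes f :: "'i::finite \<Rightarrow> real"
  assumes "\<And>i. f i > 0"
  shows "\<exists>\<delta>>0. \<forall>i. \<delta> \<le> f i"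
proof (intro exI conjI allI)
  show "Min (range f) > 0" using assms by (subst Min_gr_iff) auto
  show "Min (range f) \<le> f i" for i by (rule Min_le) auto
qed

text \<open>Induction on the number of coordinates of \<open>d\<close> that are not yet at an end point
  of their interval: such a \<open>d\<close> is a convex combination of the two points obtained by
  moving one of them to either end point.\<close>
lemma cbox_subset_convex_cart:
  fixes lo hi :: "real^'n"
  assumes "convex S" and vertices: "\<And>d. (\<forall>i. d $ i = lo $ i \<or> d $ i = hi $ i) \<Longrightarrow> d \<in> S"
  shows "cbox lo hi \<subseteq> S"
proof -
  let ?vertex_at = "\<lambda>d i. d $ i = lo $ i \<or> d $ i = hi $ i"
  have in_S: "d \<in> S" if "finite J" "d \<in> cbox lo hi" "\<forall>i. i \<notin> J \<longrightarrow> ?vertex_at d i" for J d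
    using that
  proof (induction J arbitrary: d rule: finite_induct)
    case empty
    then show ?case using vertices by blast
  next
    case (insert j J)
    show ?case
    proof (cases "?vertex_at d j")
      case True
      then have "\<forall>i. i \<notin> J \<longrightarrow> ?vertex_at d i" using insert.prems(2) by auto
      then show ?thesis using insert.IH insert.prems(1) by blast
    next
      case False
      have between: "lo $ j < d $ j" "d $ j < hi $ j"
        using insert.prems(1) False unfolding mem_box_cart by (auto simp: order.order_iff_strict)
      define d1 where "d1 = (\<chi> i. if i = j then lo $ j else d $ i)"
      define d2 where "d2 = (\<chi> i. if i = j then hi $ j else d $ i)"
      define t where "t = (d $ j - lo $ j) / (hi $ j - lo $ j)"
      have t: "0 \<le> t" "t \<le> 1" unfolding t_def using between by auto
      have "d1 \<in> cbox lo hi" "d2 \<in> cbox lo hi"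
        using insert.prems(1) between unfolding d1_def d2_def mem_box_cart by auto
      moreover have "\<forall>i. i \<notin> J \<longrightarrow> ?vertex_at d1 i" "\<forall>i. i \<notin> J \<longrightarrow> ?vertex_at d2 i"
        using insert.prems(2) unfolding d1_def d2_def by auto
      ultimately have "d1 \<in> S" "d2 \<in> S" using insert.IH by blast+
      moreover have "d = (1 - t) *\<^sub>R d1 + t *\<^sub>R d2"
      proof -
        have "(1 - t) * lo $ j + t * hi $ j = lo $ j + t * (hi $ j - lo $ j)"
          by (simp add: algebra_simps)
        also have "t * (hi $ j - lo $ j) = d $ j - lo $ j"
          unfolding t_def using between by simp
        finally show ?thesis unfolding d1_def d2_def by (auto simp: vec_eq_iff algebra_simps)
      qed
      ultimately show ?thesis using \<open>convex S\<close> t unfolding convex_def by auto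
    qed
  qed
  show ?thesis using in_S[of UNIV] by auto
qed

lemma has_derivative_if_quadratic_remainder:
  fixes f :: "'a::real_normed_vector \<Rightarrow> 'b::real_normed_vector"
  assumes "bounded_linear D"
    and remainder: "\<And>h. norm (f (y + h) - f y - D h) \<le> K * (norm h)\<^sup>2"
  shows "(f has_derivative D) (at y)"
  unfolding has_derivative_at_alt
proof (intro conjI allI impI assms(1))
  fix e :: real assume "e > 0"
  show "\<exists>d>0. \<forall>y'. norm (y' - y) < d \<longrightarrow> norm (f y' - f y - D (y' - y)) \<le> e * norm (y' - y)"
  proof (intro exI[of _ "e / (\<bar>K\<bar> + 1)"] conjI allI impI)
    show "e / (\<bar>K\<bar> + 1) > 0" using \<open>e > 0\<close> by simp
    fix y' assume close: "norm (y' - y) < e / (\<bar>K\<bar> + 1)"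
    define h where "h = y' - y"
    have "K * (norm h)\<^sup>2 \<le> (\<bar>K\<bar> + 1) * (norm h)\<^sup>2"
      by (intro mult_right_mono) auto
    also have "\<dots> = (\<bar>K\<bar> + 1) * norm h * norm h"
      by (simp add: power2_eq_square)
    also have "\<dots> \<le> (\<bar>K\<bar> + 1) * (e / (\<bar>K\<bar> + 1)) * norm h"
      using close unfolding h_def[symmetric] by (intro mult_right_mono mult_left_mono) auto
    also have "\<dots> = e * norm h" by simp
    finally show "norm (f y' - f y - D (y' - y)) \<le> e * norm (y' - y)"
      using remainder[of h] unfolding h_def by simp
  qed
qed

lemma convex_on_UNIV_if_above_tangents:
  fixes f :: "'a::real_inner \<Rightarrow> real"
  assumes tangent: "\<And>x y. f x + g x \<bullet> (y - x) \<le> f y"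
  shows "convex_on UNIV f"
proof (rule convex_onI)
  fix t :: real and x y :: 'a assume t: "0 < t" "t < 1"
  define p where "p = (1 - t) *\<^sub>R x + t *\<^sub>R y"
  have "x - p = t *\<^sub>R (x - y)" "y - p = - ((1 - t) *\<^sub>R (x - y))"
    unfolding p_def by (simp_all add: algebra_simps)
  then have "f p + t * (g p \<bullet> (x - y)) \<le> f x" "f p - (1 - t) * (g p \<bullet> (x - y)) \<le> f y"
    using tangent[of p x] tangent[of p y] by simp_all
  then have "(1 - t) * (f p + t * (g p \<bullet> (x - y))) + t * (f p - (1 - t) * (g p \<bullet> (x - y)))
      \<le> (1 - t) * f x + t * f y"
    using t by (intro add_mono mult_left_mono) auto
  then show "f ((1 - t) *\<^sub>R x + t *\<^sub>R y) \<le> (1 - t) * f x + t * f y"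
    unfolding p_def[symmetric] by (simp add: algebra_simps)
qed simp

lemma has_derivative_symmetric_difference:
  fixes g :: "'a::real_normed_vector \<Rightarrow> 'b::real_normed_vector"
  assumes g': "(g has_derivative g') (at y)" and "\<delta> > 0"
    and diff: "\<And>t. \<bar>t\<bar> < \<delta> \<Longrightarrow> g (y + t *\<^sub>R h) - g (y - t *\<^sub>R h) = (2 * t) *\<^sub>R w"
  shows "g' h = w"
proof -
  have lin: "linear g'" using g' by (rule has_derivative_linear)
  have "((\<lambda>t. y + t *\<^sub>R h) has_derivative (\<lambda>t. t *\<^sub>R h)) (at 0)"
    "((\<lambda>t. y - t *\<^sub>R h) has_derivative (\<lambda>t. - (t *\<^sub>R h))) (at 0)"
    by (auto intro!: derivative_eq_intros)
  from has_derivative_diff[OF has_derivative_compose[OF this(1)] has_derivative_compose[OF this(2)]] g'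
  have "((\<lambda>t. g (y + t *\<^sub>R h) - g (y - t *\<^sub>R h)) has_derivative
      (\<lambda>t. g' (t *\<^sub>R h) - g' (- (t *\<^sub>R h)))) (at 0)"
    by simp
  moreover have "(\<lambda>t. g' (t *\<^sub>R h) - g' (- (t *\<^sub>R h))) = (\<lambda>t. t *\<^sub>R (2 *\<^sub>R g' h))"
    using lin by (simp add: fun_eq_iff linear_scale linear_neg scaleR_2 scaleR_right_distrib)
  moreover have "((\<lambda>t. g (y + t *\<^sub>R h) - g (y - t *\<^sub>R h)) has_derivative (\<lambda>t. t *\<^sub>R (2 *\<^sub>R w))) (at 0)"
  proof (rule has_derivative_transform_within[OF _ \<open>\<delta> > 0\<close>])
    show "((\<lambda>t. t *\<^sub>R (2 *\<^sub>R w)) has_derivative (\<lambda>t. t *\<^sub>R (2 *\<^sub>R w))) (at 0)"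
      by (auto intro!: derivative_eq_intros)
  qed (auto simp: dist_real_def diff)
  ultimately have "(\<lambda>t::real. t *\<^sub>R (2 *\<^sub>R g' h)) = (\<lambda>t. t *\<^sub>R (2 *\<^sub>R w))"
    using has_derivative_unique by simp
  from fun_cong[OF this, of 1] show ?thesis by simp
qed

section \<open>Scalar soft thresholding\<close>

definition soft :: "real \<Rightarrow> real \<Rightarrow> real" where
  "soft c t = sgn t * max (\<bar>t\<bar> - c) 0"

lemma soft_thr_nth: "soft_thr lam z v $ i = soft (lam * v $ i) (z $ i)"
  by (simp add: soft_thr_def soft_def)

lemma soft_nonexpansive: "c \<ge> 0 \<Longrightarrow> \<bar>soft c a - soft c b\<bar> \<le> \<bar>a - b\<bar>"
  unfolding soft_def by (auto simp: sgn_if abs_if max_def split: if_splits)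

lemma soft_residual_bound: "c \<ge> 0 \<Longrightarrow> \<bar>t - soft c t\<bar> \<le> c"
  unfolding soft_def by (auto simp: sgn_if max_def)

lemma soft_mult_residual: "c \<ge> 0 \<Longrightarrow> soft c t * (t - soft c t) = c * \<bar>soft c t\<bar>"
  unfolding soft_def by (auto simp: sgn_if max_def algebra_simps)

text \<open>The residual \<open>t - soft c t\<close> is a subgradient of \<open>c \<bar>_\<bar>\<close> at \<open>soft c t\<close>, which
  gives the two inequalities below.\<close>
lemma soft_residual_mono:
  assumes "c \<ge> 0"
  shows "soft c a * (b - soft c b) \<le> soft c a * (a - soft c a)"
proof -
  have "soft c a * (b - soft c b) \<le> \<bar>soft c a\<bar> * \<bar>b - soft c b\<bar>"
    by (metis abs_ge_self abs_mult)
  also have "\<dots> \<le> \<bar>soft c a\<bar> * c"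
    using soft_residual_bound[OF assms] by (simp add: mult_left_mono)
  finally show ?thesis using soft_mult_residual[OF assms, of a] by (simp add: mult.commute)
qed

lemma soft_prox_ineq:
  assumes "c \<ge> 0"
  shows "(w - soft c w) * (t - soft c w) \<le> c * \<bar>t\<bar> - c * \<bar>soft c w\<bar>"
proof -
  have "(w - soft c w) * t \<le> \<bar>w - soft c w\<bar> * \<bar>t\<bar>"
    by (metis abs_ge_self abs_mult)
  also have "\<dots> \<le> c * \<bar>t\<bar>"
    using soft_residual_bound[OF assms] by (simp add: mult_right_mono)
  finally show ?thesis
    using soft_mult_residual[OF assms, of w] by (simp add: algebra_simps)
qed

lemma soft_sq_expansion_bounds:
  assumes "c \<ge> 0"
  shows "0 \<le> (soft c b)\<^sup>2 - (soft c a)\<^sup>2 - 2 * soft c a * (b - a)"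
    and "(soft c b)\<^sup>2 - (soft c a)\<^sup>2 - 2 * soft c a * (b - a) \<le> (b - a)\<^sup>2"
proof -
  define p q where "p = soft c a" and "q = soft c b"
  have mono: "p * (b - q) \<le> p * (a - p)" "q * (a - p) \<le> q * (b - q)"
    unfolding p_def q_def using soft_residual_mono[OF assms] by blast+
  have "q\<^sup>2 - p\<^sup>2 - 2 * p * (b - a) = (q - p)\<^sup>2 + 2 * (p * (a - p) - p * (b - q))"
    by (simp add: power2_eq_square algebra_simps)
  then show "0 \<le> (soft c b)\<^sup>2 - (soft c a)\<^sup>2 - 2 * soft c a * (b - a)"
    using mono(1) unfolding p_def q_def by (smt (verit) zero_le_power2)
  have "(b - a)\<^sup>2 - (q\<^sup>2 - p\<^sup>2 - 2 * p * (b - a))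
      = ((b - q) - (a - p))\<^sup>2 + 2 * (q * (b - q) - q * (a - p))"
    by (simp add: power2_eq_square algebra_simps)
  then show "(soft c b)\<^sup>2 - (soft c a)\<^sup>2 - 2 * soft c a * (b - a) \<le> (b - a)\<^sup>2"
    using mono(2) unfolding p_def q_def by (smt (verit) zero_le_power2)
qed

text \<open>\<open>soft c\<close> is piecewise linear with kinks at \<open>\<plusminus>c\<close>. Its right and left slopes at
  \<open>z\<close> are \<open>slope_right c z\<close> and \<open>slope_left c z\<close>, and it is affine on each side of \<open>z\<close>
  up to distance \<open>kink_radius c z\<close> (which is arbitrary, but positive, when \<open>c = 0\<close>
  and \<open>z = 0\<close>).\<close>
definition slope_right :: "real \<Rightarrow> real \<Rightarrow> real" where
  "slope_right c z = (if z \<ge> c \<or> z < -c then 1 else 0)"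

definition slope_left :: "real \<Rightarrow> real \<Rightarrow> real" where
  "slope_left c z = (if z > c \<or> z \<le> -c then 1 else 0)"

definition kink_radius :: "real \<Rightarrow> real \<Rightarrow> real" where
  "kink_radius c z = (if \<bar>z\<bar> \<noteq> c then \<bar>\<bar>z\<bar> - c\<bar> else if c > 0 then c else 1)"

lemma kink_radius_pos: "c \<ge> 0 \<Longrightarrow> kink_radius c z > 0"
  by (auto simp: kink_radius_def)

lemma soft_right_affine:
  "c \<ge> 0 \<Longrightarrow> 0 \<le> e \<Longrightarrow> e < kink_radius c z \<Longrightarrow> soft c (z + e) - soft c z = slope_right c z * e"
  unfolding soft_def slope_right_def kink_radius_def
  by (auto simp: sgn_if abs_if max_def split: if_splits)

lemma soft_left_affine:
  "c \<ge> 0 \<Longrightarrow> 0 \<le> e \<Longrightarrow> e < kink_radius c z \<Longrightarrow> soft c (z - e) - soft c z = - (slope_left c z * e)"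
  unfolding soft_def slope_left_def kink_radius_def
  by (auto simp: sgn_if abs_if max_def split: if_splits)

lemma soft_affine_right_of:
  assumes "c \<ge> 0" "0 \<le> p" "p < kink_radius c z" "0 \<le> q" "q < kink_radius c z"
  shows "soft c (z + q) - soft c (z + p) = slope_right c z * (q - p)"
  using soft_right_affine[OF assms(1,2,3)] soft_right_affine[OF assms(1,4,5)] by (simp add: algebra_simps)

lemma soft_affine_left_of:
  assumes "c \<ge> 0" "0 \<le> p" "p < kink_radius c z" "0 \<le> q" "q < kink_radius c z"
  shows "soft c (z - q) - soft c (z - p) = slope_left c z * (p - q)"
  using soft_left_affine[OF assms(1,2,3)] soft_left_affine[OF assms(1,4,5)] by (simp add: algebra_simps)

lemma soft_symmetric_difference:
  assumes "c \<ge> 0" "\<bar>e\<bar> < kink_radius c z"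
  shows "soft c (z + e) - soft c (z - e) = (slope_right c z + slope_left c z) * e"
proof (cases "e \<ge> 0")
  case True
  then show ?thesis using soft_right_affine[of c e z] soft_left_affine[of c e z] assms
    by (simp add: algebra_simps)
next
  case False
  then show ?thesis using soft_right_affine[of c "-e" z] soft_left_affine[of c "-e" z] assms
    by (simp add: algebra_simps)
qed

lemma slopes_upper_semicontinuous:
  assumes "c \<ge> 0" "\<bar>e\<bar> < kink_radius c z"
  shows "min (slope_right c z) (slope_left c z) \<le> min (slope_right c (z + e)) (slope_left c (z + e))"
    and "max (slope_right c (z + e)) (slope_left c (z + e)) \<le> max (slope_right c z) (slope_left c z)"
  using assms unfolding slope_right_def slope_left_def kink_radius_def
  by (auto simp: abs_if split: if_splits)

text \<open>A nonzero step from \<open>z\<close> that stays within the kink radius ends at a point where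
  \<open>soft c\<close> is differentiable, so both slopes there coincide with the one-sided slope of
  \<open>z\<close> in the direction of the step.\<close>
lemma soft_increment_between_slopes:
  assumes "c \<ge> 0" "\<bar>e\<bar> < kink_radius c z"
    and "min (slope_right c (z + e)) (slope_left c (z + e)) \<le> d"
    and "d \<le> max (slope_right c (z + e)) (slope_left c (z + e))"
  shows "soft c (z + e) - soft c z = d * e"
proof (cases "e = 0")
  case False
  have "slope_right c (z + e) = slope_left c (z + e)"
    "e > 0 \<Longrightarrow> slope_right c (z + e) = slope_right c z"
    "e < 0 \<Longrightarrow> slope_right c (z + e) = slope_left c z"
    using assms(1,2) False unfolding slope_right_def slope_left_def kink_radius_def
    by (auto simp: abs_if split: if_splits)
  moreover have "d = slope_right c (z + e)" using assms(3,4) calculation(1) by auto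
  ultimately show ?thesis
    using soft_right_affine[of c e z] soft_left_affine[of c "-e" z] assms(1,2) False
    by (cases "e > 0") auto
qed simp

section \<open>Soft thresholding of vectors\<close>

definition diag_mat :: "real^'n \<Rightarrow> real^'n^'n" where
  "diag_mat d = (\<chi> i j. if i = j then d $ i else 0)"

lemma diag_mat_mult_vec: "diag_mat d *v w = (\<chi> i. d $ i * w $ i)"
proof -
  have "(\<Sum>j\<in>UNIV. (if i = j then d $ i else 0) * w $ j) = (\<Sum>j\<in>UNIV. if i = j then d $ i * w $ j else 0)" for i
    by (rule sum.cong) auto
  then show ?thesis unfolding diag_mat_def matrix_vector_mult_def vec_eq_iff by simp
qed

lemma linear_diag_mat: "linear diag_mat"
  by (rule linearI) (simp_all add: diag_mat_def vec_eq_iff)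

lemma diag_sandwich_nth: "(A ** diag_mat d ** transpose B) $ i $ j = (\<Sum>k\<in>UNIV. A $ i $ k * d $ k * B $ j $ k)"
  unfolding matrix_matrix_mult_def diag_mat_def transpose_def
  by (simp add: if_distrib sum_distrib_right cong: if_cong)

lemma linear_diag_sandwich: "linear (\<lambda>d. A ** diag_mat d ** transpose B)"
  by (rule linearI)
    (simp_all add: vec_eq_iff diag_sandwich_nth sum.distrib[symmetric] sum_distrib_left algebra_simps)

text \<open>Generalized Jacobians of \<open>soft_thr lam _ v\<close> at \<open>z\<close> are diagonal with entries
  between \<open>slope_lo\<close> and \<open>slope_hi\<close>; at points of differentiability the two agree
  and \<open>slope_mid\<close> is the diagonal of the Jacobian.\<close>
definition slope_lo :: "real \<Rightarrow> real^'n \<Rightarrow> real^'n \<Rightarrow> real^'n" where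
  "slope_lo lam v z = (\<chi> i. min (slope_right (lam * v $ i) (z $ i)) (slope_left (lam * v $ i) (z $ i)))"

definition slope_hi :: "real \<Rightarrow> real^'n \<Rightarrow> real^'n \<Rightarrow> real^'n" where
  "slope_hi lam v z = (\<chi> i. max (slope_right (lam * v $ i) (z $ i)) (slope_left (lam * v $ i) (z $ i)))"

definition slope_mid :: "real \<Rightarrow> real^'n \<Rightarrow> real^'n \<Rightarrow> real^'n" where
  "slope_mid lam v z = (\<chi> i. (slope_right (lam * v $ i) (z $ i) + slope_left (lam * v $ i) (z $ i)) / 2)"

lemma slope_mid_in_box: "slope_mid lam v z \<in> cbox (slope_lo lam v z) (slope_hi lam v z)"
  unfolding mem_box_cart slope_lo_def slope_hi_def slope_mid_def by (auto simp: min_def max_def)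

context
  fixes lam :: real and v :: "real^'n"
  assumes thresholds_nonneg: "\<And>i. 0 \<le> lam * v $ i"
begin

lemma soft_thr_nonexpansive: "norm (soft_thr lam a v - soft_thr lam b v) \<le> norm (a - b)"
  by (rule norm_le_componentwise_cart)
    (simp add: soft_thr_nth soft_nonexpansive[OF thresholds_nonneg])

lemma kink_radius_lower_bound: "\<exists>\<delta>>0. \<forall>i. \<delta> \<le> kink_radius (lam * v $ i) (z $ i)"
  by (rule finite_positive_lower_bound) (rule kink_radius_pos[OF thresholds_nonneg])

lemma kink_radius_ball:
  obtains \<delta> where "\<delta> > 0" "\<And>h i. norm h < \<delta> \<Longrightarrow> \<bar>h $ i\<bar> < kink_radius (lam * v $ i) (z $ i)"
proof -
  obtain \<delta> where "\<delta> > 0" "\<And>i. \<delta> \<le> kink_radius (lam * v $ i) (z $ i)"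
    using kink_radius_lower_bound by blast
  then show thesis
    using that component_le_norm_cart by (metis order.strict_trans1 order.strict_trans2)
qed

lemma kink_radius_segment:
  obtains \<delta> where "\<delta> > 0" "\<And>t i. \<bar>t\<bar> < \<delta> \<Longrightarrow> \<bar>t * w $ i\<bar> < kink_radius (lam * v $ i) (z $ i)"
proof -
  obtain \<delta> where \<delta>: "\<delta> > 0" "\<And>h i. norm h < \<delta> \<Longrightarrow> \<bar>h $ i\<bar> < kink_radius (lam * v $ i) (z $ i)"
    using kink_radius_ball[where z = z] by blast
  show thesis
  proof (rule that)
    show "\<delta> / (norm w + 1) > 0" using \<delta>(1) by (simp add: add_nonneg_pos)
    fix t :: real and i assume t: "\<bar>t\<bar> < \<delta> / (norm w + 1)"
    have "norm (t *\<^sub>R w) \<le> \<bar>t\<bar> * (norm w + 1)" by (simp add: mult_left_mono)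
    also have "\<dots> < \<delta>" using t by (simp add: pos_less_divide_eq add_nonneg_pos)
    finally show "\<bar>t * w $ i\<bar> < kink_radius (lam * v $ i) (z $ i)" using \<delta>(2) by fastforce
  qed
qed

lemma soft_thr_increment_in_box:
  assumes "\<forall>i. \<bar>h $ i\<bar> < kink_radius (lam * v $ i) (z $ i)"
    and "d \<in> cbox (slope_lo lam v (z + h)) (slope_hi lam v (z + h))"
  shows "soft_thr lam (z + h) v - soft_thr lam z v = diag_mat d *v h"
  using assms
  by (auto simp: vec_eq_iff soft_thr_nth diag_mat_mult_vec mem_box_cart slope_lo_def slope_hi_def
      intro!: soft_increment_between_slopes[OF thresholds_nonneg])

lemma soft_thr_directional_increment:
  assumes "0 \<le> t" "\<forall>i. \<bar>t * h $ i\<bar> < kink_radius (lam * v $ i) (z $ i)"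
  shows "soft_thr lam (z + t *\<^sub>R h) v - soft_thr lam z v
    = t *\<^sub>R (\<chi> i. (if 0 \<le> h $ i then slope_right (lam * v $ i) (z $ i)
                  else slope_left (lam * v $ i) (z $ i)) * h $ i)"
proof -
  have "soft (lam * v $ i) (z $ i + t * h $ i) - soft (lam * v $ i) (z $ i)
      = t * ((if 0 \<le> h $ i then slope_right (lam * v $ i) (z $ i)
              else slope_left (lam * v $ i) (z $ i)) * h $ i)" for i
  proof (cases "0 \<le> h $ i")
    case True
    then have "0 \<le> t * h $ i" using assms(1) by simp
    moreover from this have "t * h $ i < kink_radius (lam * v $ i) (z $ i)"
      using assms(2)[rule_format, of i] by simp
    ultimately show ?thesis using True soft_right_affine[OF thresholds_nonneg[of i], where e="t * h $ i" and z="z $ i"]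
      by (simp add: ac_simps)
  next
    case False
    then have "t * h $ i \<le> 0" using assms(1) by (simp add: mult_nonneg_nonpos)
    then have "0 \<le> t * (- h $ i)" "t * (- h $ i) < kink_radius (lam * v $ i) (z $ i)"
      using assms(2)[rule_format, of i] by simp_all
    then show ?thesis using False soft_left_affine[OF thresholds_nonneg[of i], where e="t * (- h $ i)" and z="z $ i"]
      by (simp add: ac_simps)
  qed
  then show ?thesis by (simp add: vec_eq_iff soft_thr_nth)
qed

lemma soft_thr_symmetric_difference:
  assumes "\<forall>i. \<bar>t * w $ i\<bar> < kink_radius (lam * v $ i) (z $ i)"
  shows "soft_thr lam (z + t *\<^sub>R w) v - soft_thr lam (z - t *\<^sub>R w) v
    = (2 * t) *\<^sub>R (diag_mat (slope_mid lam v z) *v w)"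
proof -
  have "soft (lam * v $ i) (z $ i + t * w $ i) - soft (lam * v $ i) (z $ i - t * w $ i)
      = 2 * t * ((slope_right (lam * v $ i) (z $ i) + slope_left (lam * v $ i) (z $ i)) / 2 * w $ i)" for i
    using soft_symmetric_difference[OF thresholds_nonneg] assms by simp
  then show ?thesis by (simp add: vec_eq_iff soft_thr_nth diag_mat_mult_vec slope_mid_def)
qed

lemma slope_box_shrinks:
  assumes "\<forall>i. \<bar>h $ i\<bar> < kink_radius (lam * v $ i) (z $ i)"
  shows "cbox (slope_lo lam v (z + h)) (slope_hi lam v (z + h)) \<subseteq> cbox (slope_lo lam v z) (slope_hi lam v z)"
proof -
  have "slope_lo lam v z $ i \<le> slope_lo lam v (z + h) $ i" "slope_hi lam v (z + h) $ i \<le> slope_hi lam v z $ i" for i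
    using assms slopes_upper_semicontinuous[OF thresholds_nonneg] unfolding slope_lo_def slope_hi_def by simp_all
  then show ?thesis unfolding subset_iff mem_box_cart by (meson order_trans)
qed

text \<open>Off the kinks, \<open>soft_thr\<close> is locally affine with the prescribed one-sided slope
  in each coordinate: step from \<open>z\<close> to the side of that slope.\<close>
lemma soft_thr_has_diag_derivative_beside:
  assumes vertex: "\<forall>i. d $ i = slope_right (lam * v $ i) (z $ i) \<or> d $ i = slope_left (lam * v $ i) (z $ i)"
    and \<tau>: "0 < \<tau>" "\<And>i. \<tau> < kink_radius (lam * v $ i) (z $ i)"
  defines "e \<equiv> \<chi> i. if d $ i = slope_right (lam * v $ i) (z $ i) then 1 else - 1"
  shows "((\<lambda>x. soft_thr lam x v) has_derivative (\<lambda>h. diag_mat d *v h)) (at (z + \<tau> *\<^sub>R e))"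
proof -
  define p where "p = z + \<tau> *\<^sub>R e"
  obtain \<rho> where \<rho>: "\<rho> > 0" "\<And>i. \<rho> \<le> kink_radius (lam * v $ i) (z $ i) - \<tau>"
    using finite_positive_lower_bound[of "\<lambda>i. kink_radius (lam * v $ i) (z $ i) - \<tau>"] \<tau>(2) by auto
  have affine: "soft_thr lam p v + diag_mat d *v (q - p) = soft_thr lam q v"
    if "dist q p < min \<rho> \<tau>" for q
  proof -
    have "soft (lam * v $ i) (q $ i) - soft (lam * v $ i) (p $ i) = d $ i * (q $ i - p $ i)" for i
    proof -
      define u where "u = q $ i - p $ i"
      have u: "\<bar>u\<bar> < \<rho>" "\<bar>u\<bar> < \<tau>"
        using dist_vec_nth_le[of q i p] that unfolding u_def dist_real_def by linarith+
      then have bounds: "0 \<le> \<tau> + u" "\<tau> + u < kink_radius (lam * v $ i) (z $ i)"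
        "0 \<le> \<tau> - u" "\<tau> - u < kink_radius (lam * v $ i) (z $ i)"
        using \<tau> \<rho>(2)[of i] by auto
      show ?thesis
      proof (cases "d $ i = slope_right (lam * v $ i) (z $ i)")
        case True
        then have pq: "p $ i = z $ i + \<tau>" "q $ i = z $ i + (\<tau> + u)"
          unfolding p_def e_def u_def by simp_all
        show ?thesis unfolding u_def[symmetric] pq
          using True bounds \<tau> soft_affine_right_of[OF thresholds_nonneg[of i], of \<tau> "z $ i" "\<tau> + u"]
          by simp
      next
        case False
        then have pq: "p $ i = z $ i - \<tau>" "q $ i = z $ i - (\<tau> - u)"
          and d: "d $ i = slope_left (lam * v $ i) (z $ i)"
          using vertex unfolding p_def e_def u_def by auto
        show ?thesis unfolding u_def[symmetric] pq d
          using bounds \<tau> soft_affine_left_of[OF thresholds_nonneg[of i], of \<tau> "z $ i" "\<tau> - u"]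
          by simp
      qed
    qed
    then show ?thesis by (simp add: vec_eq_iff soft_thr_nth diag_mat_mult_vec algebra_simps)
  qed
  have "((\<lambda>q. soft_thr lam p v + diag_mat d *v (q - p)) has_derivative (\<lambda>h. diag_mat d *v h)) (at p)"
    by (auto intro!: derivative_eq_intros bounded_linear.has_derivative[OF matrix_vector_mul_bounded_linear])
  then show ?thesis unfolding p_def[symmetric]
    by (rule has_derivative_transform_within[where d = "min \<rho> \<tau>"]) (auto simp: \<rho>(1) \<tau>(1) affine)
qed

lemma diag_mat_vertex_in_bouligand_jac:
  assumes vertex: "\<forall>i. d $ i = slope_right (lam * v $ i) (z $ i) \<or> d $ i = slope_left (lam * v $ i) (z $ i)"
  shows "diag_mat d \<in> bouligand_jac (\<lambda>x. soft_thr lam x v) z"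
proof -
  define e :: "real^'n" where "e = (\<chi> i. if d $ i = slope_right (lam * v $ i) (z $ i) then 1 else - 1)"
  obtain \<delta> where \<delta>: "\<delta> > 0" "\<And>i. \<delta> \<le> kink_radius (lam * v $ i) (z $ i)"
    using kink_radius_lower_bound by blast
  define s where "s = (\<lambda>k::nat. z + (\<delta> / real (k + 2)) *\<^sub>R e)"
  have deriv: "((\<lambda>x. soft_thr lam x v) has_derivative (\<lambda>h. diag_mat d *v h)) (at (s k))" for k
  proof -
    have "0 < \<delta> / real (k + 2)" "\<delta> / real (k + 2) < \<delta>"
      using \<delta>(1) by (auto simp: field_simps add_pos_nonneg)
    then show ?thesis unfolding s_def e_def
      by (intro soft_thr_has_diag_derivative_beside vertex) (use \<delta>(2) in \<open>auto intro: order.strict_trans2\<close>)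
  qed
  have "(\<lambda>k. \<delta> / real k) \<longlonglongrightarrow> 0" by (rule lim_const_over_n)
  then have "(\<lambda>k. \<delta> / real (k + 2)) \<longlonglongrightarrow> 0" by (rule LIMSEQ_ignore_initial_segment)
  then have "s \<longlonglongrightarrow> z + 0 *\<^sub>R e" unfolding s_def by (intro tendsto_intros)
  moreover have "matrix (frechet_derivative (\<lambda>x. soft_thr lam x v) (at (s k))) = diag_mat d" for k
    using frechet_derivative_at[OF deriv[of k]] by (metis matrix_of_matrix_vector_mul)
  ultimately show ?thesis
    unfolding bouligand_jac_def using deriv by (auto intro!: exI[of _ s] differentiableI)
qed

lemma diag_mat_box_subset_clarke_jac:
  "diag_mat ` cbox (slope_lo lam v z) (slope_hi lam v z) \<subseteq> clarke_jac (\<lambda>x. soft_thr lam x v) z"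
proof -
  have "cbox (slope_lo lam v z) (slope_hi lam v z) \<subseteq> diag_mat -` clarke_jac (\<lambda>x. soft_thr lam x v) z"
  proof (rule cbox_subset_convex_cart)
    show "convex (diag_mat -` clarke_jac (\<lambda>x. soft_thr lam x v) z)"
      unfolding clarke_jac_def by (intro convex_linear_vimage linear_diag_mat convex_convex_hull)
    show "d \<in> diag_mat -` clarke_jac (\<lambda>x. soft_thr lam x v) z"
      if "\<forall>i. d $ i = slope_lo lam v z $ i \<or> d $ i = slope_hi lam v z $ i" for d
    proof -
      have "d $ i = slope_right (lam * v $ i) (z $ i) \<or> d $ i = slope_left (lam * v $ i) (z $ i)" for i
        using that[rule_format, of i] unfolding slope_lo_def slope_hi_def
        by (auto simp: min_def max_def split: if_split_asm)
      then have "diag_mat d \<in> bouligand_jac (\<lambda>x. soft_thr lam x v) z"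
        by (intro diag_mat_vertex_in_bouligand_jac) blast
      then show ?thesis unfolding clarke_jac_def by (simp add: hull_inc)
    qed
  qed
  then show ?thesis by blast
qed

end

section \<open>The dual function\<close>

declare transpose_matrix_vector [simp del]

context
  fixes A :: "real^'n^'m" and b :: "real^'m" and v :: "real^'n"
    and \<beta> lam :: real and xbar :: "real^'n"
  assumes v_nonneg: "\<forall>i. v $ i \<ge> 0" and beta_pos: "\<beta> > 0" and lam_pos: "lam > 0"
begin

abbreviation "dual_fun \<equiv> Phi A b v \<beta> lam xbar"
abbreviation "dual_grad \<equiv> gradPhi A b v \<beta> lam xbar"
abbreviation prox_arg :: "real^'m \<Rightarrow> real^'n" where
  "prox_arg y \<equiv> xbar - lam *\<^sub>R (transpose A *v y)"

lemma thresholds_nonneg: "0 \<le> lam * v $ i"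
  using v_nonneg lam_pos by simp

lemma gradPhi_diff:
  "dual_grad y - dual_grad y' = (1 / \<beta>) *\<^sub>R (y - y') - A *v (soft_thr lam (prox_arg y) v - soft_thr lam (prox_arg y') v)"
  by (simp add: gradPhi_def algebra_simps)

lemma gradPhi_lipschitz: "\<exists>L. lipschitz_on L UNIV dual_grad"
proof -
  obtain BA where BA: "BA > 0" "\<And>x. norm (A *v x) \<le> BA * norm x"
    using matrix_vector_mult_norm_bound[of A] by blast
  obtain BT where BT: "BT > 0" "\<And>x. norm (transpose A *v x) \<le> BT * norm x"
    using matrix_vector_mult_norm_bound[of "transpose A"] by blast
  define L where "L = 1 / \<beta> + BA * lam * BT"
  have "dist (dual_grad y) (dual_grad y') \<le> L * dist y y'" for y y'
  proof -
    let ?S = "soft_thr lam (prox_arg y) v - soft_thr lam (prox_arg y') v"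
    have "norm (A *v ?S) \<le> BA * norm ?S" by (rule BA)
    also have "\<dots> \<le> BA * norm (prox_arg y - prox_arg y')"
      by (intro mult_left_mono soft_thr_nonexpansive[OF thresholds_nonneg]) (use BA(1) in simp)
    also have "prox_arg y - prox_arg y' = - lam *\<^sub>R (transpose A *v (y - y'))"
      by (simp add: algebra_simps)
    also have "BA * norm \<dots> \<le> BA * (lam * (BT * norm (y - y')))"
      using BA(1) BT(2)[of "y - y'"] lam_pos by (simp add: mult_left_mono)
    finally have "norm (A *v ?S) \<le> BA * lam * BT * norm (y - y')" by (simp add: ac_simps)
    moreover have "norm ((1 / \<beta>) *\<^sub>R (y - y')) = 1 / \<beta> * norm (y - y')"
      using beta_pos by simp
    ultimately have "norm ((1 / \<beta>) *\<^sub>R (y - y')) + norm (A *v ?S) \<le> L * norm (y - y')"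
      unfolding L_def distrib_right by linarith
    then show ?thesis
      using norm_triangle_ineq4[of "(1 / \<beta>) *\<^sub>R (y - y')" "A *v ?S"]
      by (simp add: dist_norm gradPhi_diff)
  qed
  moreover have "0 \<le> L" using beta_pos BA BT lam_pos unfolding L_def by simp
  ultimately show ?thesis unfolding lipschitz_on_def by blast
qed

text \<open>The first-order remainder of \<open>\<Phi>\<close> is a sum of the remainders of the convex
  quadratic \<open>\<parallel>y\<parallel>\<^sup>2 / (2 \<beta>)\<close> and of the squared soft thresholds, each between \<open>0\<close> and
  a multiple of \<open>\<parallel>h\<parallel>\<^sup>2\<close>.\<close>
lemma Phi_remainder_bounds:
  "\<exists>K. \<forall>y h. 0 \<le> dual_fun (y + h) - dual_fun y - dual_grad y \<bullet> h \<and> dual_fun (y + h) - dual_fun y - dual_grad y \<bullet> h \<le> K * (norm h)\<^sup>2"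
proof -
  obtain BT where BT: "BT > 0" "\<And>x. norm (transpose A *v x) \<le> BT * norm x"
    using matrix_vector_mult_norm_bound[of "transpose A"] by blast
  define K where "K = 1 / (2 * \<beta>) + lam * BT\<^sup>2 / 2"
  have "0 \<le> dual_fun (y + h) - dual_fun y - dual_grad y \<bullet> h \<and> dual_fun (y + h) - dual_fun y - dual_grad y \<bullet> h \<le> K * (norm h)\<^sup>2" for y h
  proof -
    define z z' where "z = prox_arg y" and "z' = prox_arg (y + h)"
    have z': "z' = z - lam *\<^sub>R (transpose A *v h)" unfolding z_def z'_def by (simp add: algebra_simps)
    then have zz: "z' - z = - lam *\<^sub>R (transpose A *v h)" by simp
    define Q where "Q = (norm (soft_thr lam z' v))\<^sup>2 - (norm (soft_thr lam z v))\<^sup>2 - 2 * (soft_thr lam z v \<bullet> (z' - z))"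
    have Q_sum: "Q = (\<Sum>i\<in>UNIV. (soft (lam * v $ i) (z' $ i))\<^sup>2 - (soft (lam * v $ i) (z $ i))\<^sup>2
        - 2 * soft (lam * v $ i) (z $ i) * (z' $ i - z $ i))"
      unfolding Q_def power2_norm_cart inner_vec_def
      by (simp add: soft_thr_nth sum_subtractf sum_distrib_left ac_simps)
    have "0 \<le> Q" unfolding Q_sum
      by (rule sum_nonneg) (use soft_sq_expansion_bounds(1)[OF thresholds_nonneg] in blast)
    have "Q \<le> (\<Sum>i\<in>UNIV. (z' $ i - z $ i)\<^sup>2)" unfolding Q_sum
      by (rule sum_mono) (use soft_sq_expansion_bounds(2)[OF thresholds_nonneg] in blast)
    also have "\<dots> = (norm (z' - z))\<^sup>2" by (simp add: power2_norm_cart)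
    also have "\<dots> = lam\<^sup>2 * (norm (transpose A *v h))\<^sup>2"
      unfolding zz using lam_pos by (simp add: power_mult_distrib)
    also have "\<dots> \<le> lam\<^sup>2 * (BT * norm h)\<^sup>2"
      using BT(2)[of h] by (intro mult_left_mono power_mono) auto
    finally have Q_bound: "Q / (2 * lam) \<le> lam * BT\<^sup>2 / 2 * (norm h)\<^sup>2"
      using lam_pos by (simp add: divide_le_eq power2_eq_square algebra_simps)
    have descent_term: "(A *v soft_thr lam z v) \<bullet> h = (soft_thr lam z v \<bullet> z - soft_thr lam z v \<bullet> z') / lam"
      using lam_pos unfolding inner_matrix_vector_mult_transpose
      by (simp add: z' inner_diff_right field_simps)
    have remainder: "dual_fun (y + h) - dual_fun y - dual_grad y \<bullet> h = (norm h)\<^sup>2 / (2 * \<beta>) + Q / (2 * lam)"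
      unfolding Phi_def gradPhi_def z_def[symmetric] z'_def[symmetric] Q_def
      using beta_pos lam_pos inner_commute[of h y]
      by (simp add: descent_term inner_simps power2_norm_eq_inner field_simps)
    have "K * (norm h)\<^sup>2 = (norm h)\<^sup>2 / (2 * \<beta>) + lam * BT\<^sup>2 / 2 * (norm h)\<^sup>2"
      unfolding K_def by (simp add: field_simps)
    moreover have "0 \<le> Q / (2 * lam)" "0 \<le> (norm h)\<^sup>2 / (2 * \<beta>)"
      using \<open>0 \<le> Q\<close> lam_pos beta_pos by simp_all
    ultimately show ?thesis unfolding remainder using Q_bound by linarith
  qed
  then show ?thesis by blast
qed

lemma Phi_has_derivative: "(dual_fun has_derivative (\<lambda>h. dual_grad y \<bullet> h)) (at y)"
proof -
  obtain K where "\<And>y h. 0 \<le> dual_fun (y + h) - dual_fun y - dual_grad y \<bullet> h \<and> dual_fun (y + h) - dual_fun y - dual_grad y \<bullet> h \<le> K * (norm h)\<^sup>2"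
    using Phi_remainder_bounds by blast
  then show ?thesis
    by (intro has_derivative_if_quadratic_remainder[where K = K] bounded_linear_inner_right) simp
qed

lemma Phi_convex: "convex_on UNIV dual_fun"
proof (rule convex_on_UNIV_if_above_tangents)
  obtain K where remainder_nonneg: "\<And>y h. 0 \<le> dual_fun (y + h) - dual_fun y - dual_grad y \<bullet> h"
    using Phi_remainder_bounds by blast
  show "dual_fun x + dual_grad x \<bullet> (y - x) \<le> dual_fun y" for x y
    using remainder_nonneg[of x "y - x"] by (simp add: algebra_simps)
qed

text \<open>The sum in the last term is nonnegative when \<open>xh = soft_thr lam (prox_arg yhat) v\<close>,
  by \<open>soft_prox_ineq\<close>.\<close>
lemma primal_obj_expansion:
  assumes uh: "uh = - (1 / \<beta>) *\<^sub>R yhat" and feasible: "A *v x + u = A *v xh + uh"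
  shows "primal_obj v \<beta> lam xbar u x = primal_obj v \<beta> lam xbar uh xh
     + \<beta> / 2 * (norm (u - uh))\<^sup>2 + 1 / (2 * lam) * (norm (x - xh))\<^sup>2
     + (1 / lam) * (\<Sum>i\<in>UNIV. lam * v $ i * \<bar>x $ i\<bar> - lam * v $ i * \<bar>xh $ i\<bar>
                               - (prox_arg yhat $ i - xh $ i) * (x $ i - xh $ i))"
proof -
  define w where "w = prox_arg yhat"
  have "\<beta> / 2 * (norm u)\<^sup>2 - \<beta> / 2 * (norm uh)\<^sup>2 = \<beta> / 2 * (norm (u - uh))\<^sup>2 + \<beta> * (uh \<bullet> (u - uh))"
    by (simp add: power2_norm_eq_inner inner_simps algebra_simps inner_commute)
  moreover have "1 / (2 * lam) * (norm (x - xbar))\<^sup>2 - 1 / (2 * lam) * (norm (xh - xbar))\<^sup>2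
      = 1 / (2 * lam) * (norm (x - xh))\<^sup>2 + (1 / lam) * ((xh - xbar) \<bullet> (x - xh))"
    using lam_pos by (simp add: power2_norm_eq_inner inner_simps field_simps inner_commute)
  moreover have "\<beta> * (uh \<bullet> (u - uh)) = (transpose A *v yhat) \<bullet> (x - xh)"
  proof -
    have "u - uh = A *v (xh - x)" using feasible by (simp add: algebra_simps)
    then have "\<beta> * (uh \<bullet> (u - uh)) = - (yhat \<bullet> (A *v (xh - x)))" unfolding uh using beta_pos by simp
    also have "\<dots> = - ((xh - x) \<bullet> (transpose A *v yhat))"
      using inner_matrix_vector_mult_transpose[of A "xh - x" yhat] by (simp add: inner_commute)
    also have "\<dots> = (transpose A *v yhat) \<bullet> (x - xh)"
      by (metis inner_commute inner_minus_left minus_diff_eq)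
    finally show ?thesis .
  qed
  moreover have "(1 / lam) * ((xh - xbar) \<bullet> (x - xh)) = (1 / lam) * ((xh - w) \<bullet> (x - xh)) - (transpose A *v yhat) \<bullet> (x - xh)"
    using lam_pos unfolding w_def by (simp add: inner_diff_left inner_add_left field_simps)
  moreover have "v \<bullet> vabs x - v \<bullet> vabs xh + (1 / lam) * ((xh - w) \<bullet> (x - xh)) =
      (1 / lam) * (\<Sum>i\<in>UNIV. lam * v $ i * \<bar>x $ i\<bar> - lam * v $ i * \<bar>xh $ i\<bar> - (w $ i - xh $ i) * (x $ i - xh $ i))"
  proof -
    have "v \<bullet> vabs x - v \<bullet> vabs xh + (1 / lam) * ((xh - w) \<bullet> (x - xh))
        = (\<Sum>i\<in>UNIV. v $ i * \<bar>x $ i\<bar> - v $ i * \<bar>xh $ i\<bar> + (1 / lam) * ((xh $ i - w $ i) * (x $ i - xh $ i)))"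
      unfolding inner_vec_def vabs_def by (simp add: sum.distrib sum_subtractf sum_distrib_left)
    also have "\<dots> = (1 / lam) * (\<Sum>i\<in>UNIV. lam * v $ i * \<bar>x $ i\<bar> - lam * v $ i * \<bar>xh $ i\<bar> - (w $ i - xh $ i) * (x $ i - xh $ i))"
      unfolding sum_distrib_left by (rule sum.cong) (use lam_pos in \<open>simp_all add: field_simps\<close>)
    finally show ?thesis .
  qed
  ultimately show ?thesis
    unfolding primal_obj_def w_def[symmetric] by (simp add: algebra_simps)
qed

lemma dual_stationary_point_solves_primal:
  assumes "dual_grad yhat = 0"
  defines "uhat \<equiv> - (1 / \<beta>) *\<^sub>R yhat" and "xhat \<equiv> soft_thr lam (prox_arg yhat) v"
  shows "A *v xhat + uhat = b"
    and "A *v x + u = b \<Longrightarrow> primal_obj v \<beta> lam xbar uhat xhat \<le> primal_obj v \<beta> lam xbar u x"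
    and "A *v x + u = b \<Longrightarrow> primal_obj v \<beta> lam xbar u x = primal_obj v \<beta> lam xbar uhat xhat
           \<Longrightarrow> u = uhat \<and> x = xhat"
proof -
  show feasible: "A *v xhat + uhat = b"
    using assms(1) unfolding gradPhi_def uhat_def xhat_def by (simp add: algebra_simps)
  define gap where "gap x = (1 / lam) * (\<Sum>i\<in>UNIV. lam * v $ i * \<bar>x $ i\<bar> - lam * v $ i * \<bar>xhat $ i\<bar>
      - (prox_arg yhat $ i - xhat $ i) * (x $ i - xhat $ i))" for x
  have gap_nonneg: "0 \<le> gap x" for x
    unfolding gap_def xhat_def soft_thr_nth using lam_pos soft_prox_ineq[OF thresholds_nonneg]
    by (intro mult_nonneg_nonneg sum_nonneg) (simp_all add: diff_ge_0_iff_ge)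
  assume "A *v x + u = b"
  then have expansion: "primal_obj v \<beta> lam xbar u x = primal_obj v \<beta> lam xbar uhat xhat
      + \<beta> / 2 * (norm (u - uhat))\<^sup>2 + 1 / (2 * lam) * (norm (x - xhat))\<^sup>2 + gap x"
    using primal_obj_expansion[OF uhat_def[THEN meta_eq_to_obj_eq]] feasible unfolding gap_def by simp
  have squares: "0 \<le> \<beta> / 2 * (norm (u - uhat))\<^sup>2" "0 \<le> 1 / (2 * lam) * (norm (x - xhat))\<^sup>2"
    using beta_pos lam_pos by simp_all
  show "primal_obj v \<beta> lam xbar uhat xhat \<le> primal_obj v \<beta> lam xbar u x"
    using expansion squares gap_nonneg[of x] by linarith
  assume "primal_obj v \<beta> lam xbar u x = primal_obj v \<beta> lam xbar uhat xhat"
  then have "\<beta> / 2 * (norm (u - uhat))\<^sup>2 = 0" "1 / (2 * lam) * (norm (x - xhat))\<^sup>2 = 0"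
    using expansion squares gap_nonneg[of x] by linarith+
  then show "u = uhat \<and> x = xhat" using beta_pos lam_pos by simp
qed

abbreviation dual_jac :: "real^'n \<Rightarrow> real^'m^'m" where
  "dual_jac d \<equiv> (1 / \<beta>) *\<^sub>R mat 1 + lam *\<^sub>R (A ** diag_mat d ** transpose A)"

lemma dual_jac_mult_vec:
  "dual_jac d *v h = (1 / \<beta>) *\<^sub>R h + lam *\<^sub>R (A *v (diag_mat d *v (transpose A *v h)))"
proof -
  have "(A ** diag_mat d ** transpose A) *v h = A *v (diag_mat d *v (transpose A *v h))"
    by (simp only: matrix_vector_mul_assoc matrix_mul_assoc)
  then show ?thesis
    by (simp add: matrix_vector_mult_add_rdistrib scaleR_matrix_vector_assoc[symmetric])
qed

lemma dual_jac_image: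
  "dual_jac ` S = (\<lambda>M. (1 / \<beta>) *\<^sub>R mat 1 + lam *\<^sub>R M) ` (\<lambda>d. A ** diag_mat d ** transpose A) ` S"
  by (simp add: image_image)

lemma compact_dual_jac_image: "compact S \<Longrightarrow> compact (dual_jac ` S)"
  unfolding dual_jac_image
  by (intro compact_affinity compact_continuous_image linear_continuous_on
      linear_conv_bounded_linear[THEN iffD1] linear_diag_sandwich)

lemma convex_dual_jac_image: "convex S \<Longrightarrow> convex (dual_jac ` S)"
  unfolding dual_jac_image by (intro convex_affinity convex_linear_image linear_diag_sandwich)

text \<open>Small symmetric differences of \<open>soft_thr\<close> are exactly linear, with the averaged
  slopes \<open>slope_mid\<close>, even at kinks; so wherever \<open>dual_grad\<close> is differentiable, they
  determine its Jacobian.\<close>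
lemma gradPhi_jacobian:
  assumes "dual_grad differentiable (at y)"
  shows "matrix (frechet_derivative dual_grad (at y)) = dual_jac (slope_mid lam v (prox_arg y))"
proof -
  define f' where "f' = frechet_derivative dual_grad (at y)"
  define J where "J = dual_jac (slope_mid lam v (prox_arg y))"
  have f': "(dual_grad has_derivative f') (at y)"
    using assms frechet_derivative_works f'_def by blast
  have "f' h = J *v h" for h
  proof -
    define W where "W = lam *\<^sub>R (transpose A *v h)"
    obtain \<delta> where \<delta>: "\<delta> > 0" "\<And>t i. \<bar>t\<bar> < \<delta> \<Longrightarrow> \<bar>t * W $ i\<bar> < kink_radius (lam * v $ i) (prox_arg y $ i)"
      using kink_radius_segment[OF thresholds_nonneg, where z = "prox_arg y" and w = W] by blast
    show ?thesis
    proof (rule has_derivative_symmetric_difference[OF f' \<delta>(1)])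
      fix t :: real assume "\<bar>t\<bar> < \<delta>"
      have args: "prox_arg (y + t *\<^sub>R h) = prox_arg y - t *\<^sub>R W" "prox_arg (y - t *\<^sub>R h) = prox_arg y + t *\<^sub>R W"
        unfolding W_def by (simp_all add: algebra_simps)
      have "(y + t *\<^sub>R h) - (y - t *\<^sub>R h) = t *\<^sub>R h + t *\<^sub>R h" by simp
      also have "\<dots> = (2 * t) *\<^sub>R h" unfolding mult_2 scaleR_left_distrib ..
      finally have steps: "(y + t *\<^sub>R h) - (y - t *\<^sub>R h) = (2 * t) *\<^sub>R h" .
      have "soft_thr lam (prox_arg y + t *\<^sub>R W) v - soft_thr lam (prox_arg y - t *\<^sub>R W) v
          = (2 * t) *\<^sub>R (diag_mat (slope_mid lam v (prox_arg y)) *v W)"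
        using \<delta>(2) \<open>\<bar>t\<bar> < \<delta>\<close> by (intro soft_thr_symmetric_difference[OF thresholds_nonneg]) blast
      then have soft_diff: "soft_thr lam (prox_arg y - t *\<^sub>R W) v - soft_thr lam (prox_arg y + t *\<^sub>R W) v
          = - ((2 * t) *\<^sub>R (diag_mat (slope_mid lam v (prox_arg y)) *v W))"
        by (metis minus_diff_eq)
      have "dual_grad (y + t *\<^sub>R h) - dual_grad (y - t *\<^sub>R h)
          = (1 / \<beta>) *\<^sub>R ((2 * t) *\<^sub>R h) - A *v - ((2 * t) *\<^sub>R (diag_mat (slope_mid lam v (prox_arg y)) *v W))"
        unfolding gradPhi_diff args steps soft_diff ..
      also have "\<dots> = (2 * t) *\<^sub>R (J *v h)"
        unfolding J_def dual_jac_mult_vec W_def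
        by (simp add: matrix_vector_mult_uminus matrix_vector_mult_scaleR algebra_simps)
      finally show "dual_grad (y + t *\<^sub>R h) - dual_grad (y - t *\<^sub>R h) = (2 * t) *\<^sub>R (J *v h)" .
    qed
  qed
  then have "f' = (\<lambda>h. J *v h)" by auto
  then show ?thesis unfolding f'_def J_def by simp
qed

lemma bouligand_jac_gradPhi_subset:
  "bouligand_jac dual_grad y \<subseteq> dual_jac ` cbox (slope_lo lam v (prox_arg y)) (slope_hi lam v (prox_arg y))"
proof
  fix V assume "V \<in> bouligand_jac dual_grad y"
  then obtain s where s: "\<And>k. dual_grad differentiable (at (s k))" "s \<longlonglongrightarrow> y"
    "(\<lambda>k. matrix (frechet_derivative dual_grad (at (s k)))) \<longlonglongrightarrow> V"
    unfolding bouligand_jac_def by blast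
  define z where "z = prox_arg y"
  obtain \<delta> where \<delta>: "\<delta> > 0" "\<And>h i. norm h < \<delta> \<Longrightarrow> \<bar>h $ i\<bar> < kink_radius (lam * v $ i) (z $ i)"
    using kink_radius_ball[OF thresholds_nonneg, where z = z] by blast
  have "(\<lambda>k. prox_arg (s k)) \<longlonglongrightarrow> z"
    unfolding z_def
    by (intro tendsto_intros bounded_linear.tendsto[OF matrix_vector_mul_bounded_linear] s(2))
  then have "eventually (\<lambda>k. norm (prox_arg (s k) - z) < \<delta>) sequentially"
    using \<delta>(1) by (auto simp: tendsto_iff dist_norm)
  then have "eventually (\<lambda>k. matrix (frechet_derivative dual_grad (at (s k)))
      \<in> dual_jac ` cbox (slope_lo lam v z) (slope_hi lam v z)) sequentially"
  proof eventually_elim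
    case (elim k)
    let ?z' = "prox_arg (s k)"
    have "cbox (slope_lo lam v ?z') (slope_hi lam v ?z') \<subseteq> cbox (slope_lo lam v z) (slope_hi lam v z)"
      using slope_box_shrinks[OF thresholds_nonneg, of "?z' - z" z] \<delta>(2)[OF elim] by simp
    then show ?case
      using gradPhi_jacobian[OF s(1)] slope_mid_in_box by blast
  qed
  then show "V \<in> dual_jac ` cbox (slope_lo lam v (prox_arg y)) (slope_hi lam v (prox_arg y))"
    unfolding z_def[symmetric]
    by (rule Lim_in_closed_set[OF compact_imp_closed[OF compact_dual_jac_image[OF compact_cbox]]
          _ trivial_limit_sequentially s(3)])
qed

lemma clarke_jac_gradPhi_subset:
  "clarke_jac dual_grad y \<subseteq> dual_jac ` cbox (slope_lo lam v (prox_arg y)) (slope_hi lam v (prox_arg y))"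
  unfolding clarke_jac_def
  by (intro hull_minimal bouligand_jac_gradPhi_subset convex_dual_jac_image convex_box)

lemma clarke_jac_gradPhi_subset_soft_thr:
  "clarke_jac dual_grad y \<subseteq> {(1 / \<beta>) *\<^sub>R mat 1 + lam *\<^sub>R (A ** D ** transpose A) | D.
      D \<in> clarke_jac (\<lambda>x. soft_thr lam x v) (prox_arg y)}"
  using clarke_jac_gradPhi_subset diag_mat_box_subset_clarke_jac[OF thresholds_nonneg] by blast

lemma gradPhi_directional_derivative:
  "\<exists>l. ((\<lambda>t. (1 / t) *\<^sub>R (dual_grad (y + t *\<^sub>R d) - dual_grad y)) \<longlongrightarrow> l) (at_right 0)"
proof -
  define z where "z = prox_arg y"
  define W where "W = - (lam *\<^sub>R (transpose A *v d))"
  define R where "R = (\<chi> i. (if 0 \<le> W $ i then slope_right (lam * v $ i) (z $ i)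
      else slope_left (lam * v $ i) (z $ i)) * W $ i)"
  obtain \<delta> where \<delta>: "\<delta> > 0" "\<And>t i. \<bar>t\<bar> < \<delta> \<Longrightarrow> \<bar>t * W $ i\<bar> < kink_radius (lam * v $ i) (z $ i)"
    using kink_radius_segment[OF thresholds_nonneg, where z = z and w = W] by blast
  have "(1 / t) *\<^sub>R (dual_grad (y + t *\<^sub>R d) - dual_grad y) = (1 / \<beta>) *\<^sub>R d - A *v R" if t: "0 < t" "t < \<delta>" for t
  proof -
    have "prox_arg (y + t *\<^sub>R d) = z + t *\<^sub>R W" unfolding z_def W_def by (simp add: algebra_simps)
    moreover have "soft_thr lam (z + t *\<^sub>R W) v - soft_thr lam z v = t *\<^sub>R R"
      unfolding R_def using t \<delta>(2)[of t] by (intro soft_thr_directional_increment[OF thresholds_nonneg]) auto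
    ultimately have "dual_grad (y + t *\<^sub>R d) - dual_grad y = t *\<^sub>R ((1 / \<beta>) *\<^sub>R d - A *v R)"
      unfolding gradPhi_diff z_def[symmetric] by (simp add: matrix_vector_mult_scaleR algebra_simps)
    then show ?thesis using t by simp
  qed
  then have "eventually (\<lambda>t. (1 / t) *\<^sub>R (dual_grad (y + t *\<^sub>R d) - dual_grad y) = (1 / \<beta>) *\<^sub>R d - A *v R) (at_right 0)"
    unfolding eventually_at_right_field using \<delta>(1) by blast
  then show ?thesis by (intro exI) (rule tendsto_eventually)
qed

text \<open>The semismoothness remainder vanishes identically near every point, because
  \<open>soft_thr\<close> is piecewise linear.\<close>
lemma gradPhi_exact_linearization:
  "\<exists>\<delta>>0. \<forall>h. norm h < \<delta> \<longrightarrow> (\<forall>V \<in> clarke_jac dual_grad (y + h). dual_grad (y + h) - dual_grad y - V *v h = 0)"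
proof -
  define z where "z = prox_arg y"
  obtain BT where BT: "BT > 0" "\<And>x. norm (transpose A *v x) \<le> BT * norm x"
    using matrix_vector_mult_norm_bound[of "transpose A"] by blast
  obtain \<delta> where \<delta>: "\<delta> > 0" "\<And>h i. norm h < \<delta> \<Longrightarrow> \<bar>h $ i\<bar> < kink_radius (lam * v $ i) (z $ i)"
    using kink_radius_ball[OF thresholds_nonneg, where z = z] by blast
  have "dual_grad (y + h) - dual_grad y - V *v h = 0"
    if h: "norm h < \<delta> / (lam * BT)" and V: "V \<in> clarke_jac dual_grad (y + h)" for h V
  proof -
    define W where "W = - (lam *\<^sub>R (transpose A *v h))"
    have "norm W \<le> lam * (BT * norm h)" unfolding W_def using lam_pos BT(2)[of h] by (simp add: mult_left_mono)
    also have "\<dots> < \<delta>" using h lam_pos BT(1) by (simp add: pos_less_divide_eq ac_simps)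
    finally have near: "\<forall>i. \<bar>W $ i\<bar> < kink_radius (lam * v $ i) (z $ i)" using \<delta>(2) by blast
    have prox: "prox_arg (y + h) = z + W" unfolding z_def W_def by (simp add: algebra_simps)
    obtain d where d: "d \<in> cbox (slope_lo lam v (z + W)) (slope_hi lam v (z + W))" "V = dual_jac d"
      using V clarke_jac_gradPhi_subset[of "y + h"] unfolding prox by blast
    have "soft_thr lam (z + W) v - soft_thr lam z v = diag_mat d *v W"
      by (rule soft_thr_increment_in_box[OF thresholds_nonneg near d(1)])
    then show ?thesis
      unfolding gradPhi_diff prox z_def[symmetric] d(2) dual_jac_mult_vec W_def
      by (simp add: matrix_vector_mult_uminus matrix_vector_mult_scaleR)
  qed
  moreover have "\<delta> / (lam * BT) > 0" using \<delta>(1) lam_pos BT(1) by simp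
  ultimately show ?thesis by blast
qed

lemma gradPhi_strongly_semismooth: "strongly_semismooth dual_grad"
  unfolding strongly_semismooth_def
proof
  fix y
  obtain L where "lipschitz_on L UNIV dual_grad" using gradPhi_lipschitz by blast
  then have "lipschitz_on L (ball y 1) dual_grad" by (rule lipschitz_on_subset) simp
  then have lipschitz: "\<exists>e>0. \<exists>L. lipschitz_on L (ball y e) dual_grad" using zero_less_one by blast
  obtain \<delta> where "\<delta> > 0" "\<forall>h. norm h < \<delta> \<longrightarrow> (\<forall>V \<in> clarke_jac dual_grad (y + h). dual_grad (y + h) - dual_grad y - V *v h = 0)"
    using gradPhi_exact_linearization[of y] by blast
  then have remainder: "\<exists>C \<delta>. \<delta> > 0 \<and> (\<forall>h. 0 < norm h \<and> norm h < \<delta> \<longrightarrow>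
      (\<forall>V \<in> clarke_jac dual_grad (y + h). norm (dual_grad (y + h) - dual_grad y - V *v h) \<le> C * (norm h)\<^sup>2))"
    by (intro exI[of _ 0] exI[of _ \<delta>]) simp
  then show "strongly_semismooth_at dual_grad y"
    unfolding strongly_semismooth_at_def
    by (intro conjI lipschitz remainder allI gradPhi_directional_derivative)
qed

end

theorem lemma4p1:
  fixes A :: "real^'n^'m" and b :: "real^'m" and v :: "real^'n"
    and \<beta> lam :: real and xbar :: "real^'n"
  assumes v_nonneg: "\<forall>i. v $ i \<ge> 0"
    and beta_pos: "\<beta> > 0" and lam_pos: "lam > 0"
  shows
   "(convex_on UNIV (Phi A b v \<beta> lam xbar)
     \<and> (\<forall>y. (Phi A b v \<beta> lam xbar has_derivative (\<lambda>h. gradPhi A b v \<beta> lam xbar y \<bullet> h)) (at y))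
     \<and> continuous_on UNIV (gradPhi A b v \<beta> lam xbar))
   \<and> (\<forall>yhat. gradPhi A b v \<beta> lam xbar yhat = 0 \<longrightarrow>
        (let uhat = - (1 / \<beta>) *\<^sub>R yhat;
             xhat = soft_thr lam (xbar - lam *\<^sub>R (transpose A *v yhat)) v
         in A *v xhat + uhat = b
            \<and> (\<forall>u x. A *v x + u = b \<longrightarrow>
                 primal_obj v \<beta> lam xbar uhat xhat \<le> primal_obj v \<beta> lam xbar u x)
            \<and> (\<forall>u x. A *v x + u = b \<and>
                 primal_obj v \<beta> lam xbar u x = primal_obj v \<beta> lam xbar uhat xhat
                 \<longrightarrow> u = uhat \<and> x = xhat)))
   \<and> (\<exists>L. lipschitz_on L UNIV (gradPhi A b v \<beta> lam xbar))
   \<and> strongly_semismooth (gradPhi A b v \<beta> lam xbar)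
   \<and> (\<forall>y. clarke_jac (gradPhi A b v \<beta> lam xbar) y \<subseteq>
          {(1 / \<beta>) *\<^sub>R mat 1 + lam *\<^sub>R (A ** D ** transpose A) | D.
             D \<in> clarke_jac (\<lambda>x. soft_thr lam x v) (xbar - lam *\<^sub>R (transpose A *v y))})"
proof -
  note setting = v_nonneg beta_pos lam_pos
  obtain L where lipschitz: "lipschitz_on L UNIV (gradPhi A b v \<beta> lam xbar)"
    using gradPhi_lipschitz[OF setting] by blast
  have a: "convex_on UNIV (Phi A b v \<beta> lam xbar)
     \<and> (\<forall>y. (Phi A b v \<beta> lam xbar has_derivative (\<lambda>h. gradPhi A b v \<beta> lam xbar y \<bullet> h)) (at y))
     \<and> continuous_on UNIV (gradPhi A b v \<beta> lam xbar)"
    using Phi_convex[OF setting] Phi_has_derivative[OF setting] lipschitz_on_continuous_on[OF lipschitz]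
    by blast
  have b: "let uhat = - (1 / \<beta>) *\<^sub>R yhat;
             xhat = soft_thr lam (xbar - lam *\<^sub>R (transpose A *v yhat)) v
         in A *v xhat + uhat = b
            \<and> (\<forall>u x. A *v x + u = b \<longrightarrow>
                 primal_obj v \<beta> lam xbar uhat xhat \<le> primal_obj v \<beta> lam xbar u x)
            \<and> (\<forall>u x. A *v x + u = b \<and>
                 primal_obj v \<beta> lam xbar u x = primal_obj v \<beta> lam xbar uhat xhat
                 \<longrightarrow> u = uhat \<and> x = xhat)"
    if "gradPhi A b v \<beta> lam xbar yhat = 0" for yhat
    unfolding Let_def using dual_stationary_point_solves_primal[OF setting that] by blast
  show ?thesis
    using a b lipschitz gradPhi_strongly_semismooth[OF setting] clarke_jac_gradPhi_subset_soft_thr[OF setting]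
    by blast
qed

end
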